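(* Consider algorithm TRIEST-BASE (described in the context) run with integer parameter $M\ge 6$ on an insertion-only edge stream. For every time $t$: if $t\le M$ then $\xi^{(t)}\tau^{(t)}=\tau^{(t)}=|\Delta^{(t)}|$, and if $t>M$ then $\mathbb{E}\left[\xi^{(t)}\tau^{(t)}\right]=|\Delta^{(t)}|$.
   Context: An insertion-only edge stream: at each time step $t=1,2,\dots$ an edge $e_t=\{u,v\}$ between two distinct vertices arrives, which is not already present; $G^{(t)}=(V^{(t)},E^{(t)})$ with $E^{(t)}=\{e_1,\dots,e_t\}$. A triangle in $G^{(t)}$ is a set of three edges $\{\{u,v\},\{v,w\},\{w,u\}\}\subseteq E^{(t)}$ with $u,v,w$ distinct; $\Delta^{(t)}$ is the set of all triangles of $G^{(t)}$. TRIEST-BASE maintains an edge sample $\mathcal{S}$ (initially empty) by reservoir sampling with capacity $M$: at time $t$, if $t\le M$ the edge $e_t$ is inserted into $\mathcal{S}$; if $t>M$, with probability $M/t$ an edge chosen uniformly at random from $\mathcal{S}$ is removed from $\mathcal{S}$ and then $e_t$ is inserted, otherwise $\mathcal{S}$ is unchanged. It maintains a counter $\tau$ (initially $0$): immediately after an edge $\{u,v\}$ is inserted into (resp. removed from) $\mathcal{S}$, $\tau$ is increased (resp. decreased) by $|\mathcal{N}^{\mathcal{S}}_{u,v}|$, the number of vertices $c$ such that both $\{c,u\}$ and $\{c,v\}$ are in the current $\mathcal{S}$. $\tau^{(t)}$ denotes the value of $\tau$ at the end of time step $t$. For positive integers $a\le\min\{M,b\}$, $\xi_{a,b}=1$ if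 $b\le M$ and $\xi_{a,b}=\prod_{i=0}^{a-1}\frac{b-i}{M-i}$ otherwise; $\xi^{(t)}=\xi_{3,t}$. The algorithm's estimate of $|\Delta^{(t)}|$ is $\xi^{(t)}\tau^{(t)}$. *)

theory Defs
  imports "HOL-Probability.Probability"
begin

text \<open>Edges are 2-element vertex sets. A stream is a function es :: nat => 'a set;
  es t is the edge arriving at time t (t = 1,2,...).\<close>

definition edges_upto :: "(nat \<Rightarrow> 'a set) \<Rightarrow> nat \<Rightarrow> 'a set set" where
  "edges_upto es t = es ` {1..t}"

definition triangles :: "'a set set \<Rightarrow> 'a set set set" where
  "triangles E = {T. \<exists>u v w. u \<noteq> v \<and> v \<noteq> w \<and> w \<noteq> u \<and>
                     T = {{u,v},{v,w},{w,u}} \<and> T \<subseteq> E}"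

definition nbr_count :: "'a set set \<Rightarrow> 'a set \<Rightarrow> int" where
  "nbr_count S e = int (card {c. \<exists>u v. e = {u,v} \<and> u \<noteq> v \<and> {c,u} \<in> S \<and> {c,v} \<in> S})"

text \<open>State: (sample S, counter tau). Insert / remove an edge, updating tau
  with the neighbourhood count in the sample right after the operation.\<close>
definition ins_edge :: "'a set \<Rightarrow> 'a set set \<times> int \<Rightarrow> 'a set set \<times> int" where
  "ins_edge e st = (let S' = insert e (fst st) in (S', snd st + nbr_count S' e))"

definition del_edge :: "'a set \<Rightarrow> 'a set set \<times> int \<Rightarrow> 'a set set \<times> int" where
  "del_edge e st = (let S' = fst st - {e} in (S', snd st - nbr_count S' e))"

definition triest_step :: "nat \<Rightarrow> nat \<Rightarrow> 'a set \<Rightarrow> 'a set set \<times> int \<Rightarrow> ('a set set \<times> int) pmf" where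
  "triest_step M t e st =
     (if t \<le> M then return_pmf (ins_edge e st)
      else bind_pmf (bernoulli_pmf (real M / real t))
             (\<lambda>b. if b then map_pmf (\<lambda>f. ins_edge e (del_edge f st)) (pmf_of_set (fst st))
                  else return_pmf st))"

fun triest_base :: "nat \<Rightarrow> (nat \<Rightarrow> 'a set) \<Rightarrow> nat \<Rightarrow> ('a set set \<times> int) pmf" where
  "triest_base M es 0 = return_pmf ({}, 0)"
| "triest_base M es (Suc t) = bind_pmf (triest_base M es t) (triest_step M (Suc t) (es (Suc t)))"

definition xi :: "nat \<Rightarrow> nat \<Rightarrow> nat \<Rightarrow> real" where
  "xi M a b = (if b \<le> M then 1 else (\<Prod>i<a. (real b - real i) / (real M - real i)))"

end

theory Submission
  imports Defs
begin

text \<open>The counter always equals the number of triangles of the current sample: inserting an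
  edge \<open>{u,v}\<close> creates one triangle per common neighbour of \<open>u\<close> and \<open>v\<close> in the sample,
  and removing it destroys as many. Reservoir sampling keeps the sample uniformly distributed
  over the \<open>min t M\<close>-subsets of the first \<open>t\<close> edges. A fixed triangle lies in
  \<open>C(t-3, M-3)\<close> of the \<open>C(t, M)\<close> subsets of size \<open>M\<close>, and \<open>\<xi> C(t-3, M-3) = C(t, M)\<close>,
  so linearity of expectation gives the claim.\<close>

section \<open>Triangles and common neighbours\<close>

definition edge_set :: "'a set set \<Rightarrow> bool" where
  "edge_set S \<longleftrightarrow> (\<forall>e\<in>S. card e = 2)"

definition common_nbrs :: "'a set set \<Rightarrow> 'a \<Rightarrow> 'a \<Rightarrow> 'a set" where
  "common_nbrs S u v = {c. {c,u} \<in> S \<and> {c,v} \<in> S}"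

lemma edge_set_subset: "edge_set S \<Longrightarrow> T \<subseteq> S \<Longrightarrow> edge_set T"
  unfolding edge_set_def by blast

lemma edge_set_singleton_notin: "edge_set S \<Longrightarrow> {c} \<notin> S"
  unfolding edge_set_def by force

lemma finite_common_nbrs:
  assumes "edge_set S" "finite S"
  shows "finite (common_nbrs S u v)"
proof (rule finite_subset)
  show "common_nbrs S u v \<subseteq> \<Union>S" unfolding common_nbrs_def by blast
  show "finite (\<Union>S)"
    using assms by (intro finite_Union) (auto simp: edge_set_def intro: card_ge_0_finite)
qed

lemma common_nbrs_notin:
  "edge_set S \<Longrightarrow> c \<in> common_nbrs S u v \<Longrightarrow> c \<noteq> u \<and> c \<noteq> v"
  unfolding common_nbrs_def using edge_set_singleton_notin by fastforce

lemma common_nbrs_insert_self: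
  assumes "edge_set S" "u \<noteq> v"
  shows "common_nbrs (insert {u,v} S) u v = common_nbrs S u v"
  using assms edge_set_singleton_notin[OF assms(1)]
  by (auto simp: common_nbrs_def doubleton_eq_iff)

lemma nbr_count_doubleton:
  assumes "u \<noteq> v"
  shows "nbr_count S {u,v} = int (card (common_nbrs S u v))"
  unfolding nbr_count_def common_nbrs_def
  using assms by (metis (no_types, opaque_lifting) doubleton_eq_iff insert_commute)

lemma triangleI:
  "a \<noteq> b \<Longrightarrow> b \<noteq> c \<Longrightarrow> c \<noteq> a \<Longrightarrow> {{a,b},{b,c},{c,a}} \<subseteq> E
    \<Longrightarrow> {{a,b},{b,c},{c,a}} \<in> triangles E"
  unfolding triangles_def by blast

lemma triangleE:
  assumes "T \<in> triangles E"
  obtains a b c where "a \<noteq> b" "b \<noteq> c" "c \<noteq> a" "T = {{a,b},{b,c},{c,a}}" "T \<subseteq> E"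
  using assms unfolding triangles_def by blast

lemma finite_triangles: "finite E \<Longrightarrow> finite (triangles E)"
  by (rule finite_subset[of _ "Pow E"]) (auto simp: triangles_def)

lemma triangles_empty [simp]: "triangles {} = {}"
  by (auto simp: triangles_def)

lemma card_triangle: "T \<in> triangles E \<Longrightarrow> card T = 3"
  by (erule triangleE) (auto simp: doubleton_eq_iff)

lemma triangle_subset: "T \<in> triangles E \<Longrightarrow> T \<subseteq> E"
  by (erule triangleE)

lemma triangles_conv_UNIV: "triangles E = {T \<in> triangles UNIV. T \<subseteq> E}"
  unfolding triangles_def by auto

lemma triangles_subset: "S \<subseteq> E \<Longrightarrow> triangles S = {T \<in> triangles E. T \<subseteq> S}"
  using triangles_conv_UNIV[of S] triangles_conv_UNIV[of E] by blast

lemma triangle_through_edge: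
  assumes "a \<noteq> b" "b \<noteq> c" "c \<noteq> a" "{u,v} \<in> {{a,b},{b,c},{c,a}}"
  obtains w where "w \<noteq> u" "w \<noteq> v" "{{a,b},{b,c},{c,a}} = {{u,v},{v,w},{w,u}}"
proof -
  have rot: "{{x,y},{y,z},{z,x}} = {{y,z},{z,x},{x,y}}" for x y z :: 'a by auto
  have flip: "{{x,y},{y,z},{z,x}} = {{y,x},{x,z},{z,y}}" for x y z :: 'a by auto
  from assms(4) consider "{u,v} = {a,b}" | "{u,v} = {b,c}" | "{u,v} = {c,a}" by blast
  then show thesis
  proof cases
    case 1
    then consider "u = a" "v = b" | "u = b" "v = a" by (auto simp: doubleton_eq_iff)
    then show ?thesis using assms(1-3) that[of c] flip[of a b c] by cases auto
  next
    case 2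
    then consider "u = b" "v = c" | "u = c" "v = b" by (auto simp: doubleton_eq_iff)
    then show ?thesis using assms(1-3) that[of a] rot[of a b c] flip[of b c a] by cases auto
  next
    case 3
    then consider "u = c" "v = a" | "u = a" "v = c" by (auto simp: doubleton_eq_iff)
    then show ?thesis using assms(1-3) that[of b] rot[of b c a] flip[of c a b] by cases auto
  qed
qed

lemma triangles_insert:
  assumes "edge_set S" "u \<noteq> v"
  shows "triangles (insert {u,v} S)
           = triangles S \<union> (\<lambda>c. {{u,v},{v,c},{c,u}}) ` common_nbrs S u v"
proof (intro equalityI subsetI)
  fix T assume "T \<in> triangles (insert {u,v} S)"
  then obtain a b c where abc: "a \<noteq> b" "b \<noteq> c" "c \<noteq> a"
    and T: "T = {{a,b},{b,c},{c,a}}" "T \<subseteq> insert {u,v} S"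
    by (rule triangleE)
  show "T \<in> triangles S \<union> (\<lambda>c. {{u,v},{v,c},{c,u}}) ` common_nbrs S u v"
  proof (cases "{u,v} \<in> T")
    case False
    then have "T \<subseteq> S" using T(2) by blast
    then have "T \<in> triangles S" unfolding T(1) using abc by (intro triangleI)
    then show ?thesis by blast
  next
    case True
    then obtain w where w: "w \<noteq> u" "w \<noteq> v" "T = {{u,v},{v,w},{w,u}}"
      unfolding T(1) by (rule triangle_through_edge[OF abc])
    have "{v,w} \<in> S" "{w,u} \<in> S"
      using T(2) w assms(2) by (auto simp: doubleton_eq_iff)
    then have "w \<in> common_nbrs S u v" by (simp add: common_nbrs_def insert_commute)
    then show ?thesis using w(3) by blast
  qed
next
  fix T assume "T \<in> triangles S \<union> (\<lambda>c. {{u,v},{v,c},{c,u}}) ` common_nbrs S u v"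
  then show "T \<in> triangles (insert {u,v} S)"
  proof
    assume "T \<in> triangles S"
    then show ?thesis using triangles_subset[of S "insert {u,v} S"] by blast
  next
    assume "T \<in> (\<lambda>c. {{u,v},{v,c},{c,u}}) ` common_nbrs S u v"
    then obtain c where c: "c \<in> common_nbrs S u v" "T = {{u,v},{v,c},{c,u}}" by blast
    have "{{u,v},{v,c},{c,u}} \<subseteq> insert {u,v} S"
      using c(1) by (simp add: common_nbrs_def insert_commute)
    then show ?thesis
      unfolding c(2) using common_nbrs_notin[OF assms(1) c(1)] assms(2) by (intro triangleI) auto
  qed
qed

lemma card_triangles_insert:
  assumes "edge_set S" "finite S" "u \<noteq> v" "{u,v} \<notin> S"
  shows "card (triangles (insert {u,v} S)) = card (triangles S) + card (common_nbrs S u v)"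
proof -
  let ?g = "\<lambda>c. {{u,v},{v,c},{c,u}}"
  have "triangles S \<inter> ?g ` common_nbrs S u v = {}"
  proof (intro equals0I)
    fix T assume "T \<in> triangles S \<inter> ?g ` common_nbrs S u v"
    then have "T \<subseteq> S" "{u,v} \<in> T" by (auto dest: triangle_subset)
    with assms(4) show False by (simp add: subset_iff)
  qed
  moreover have "inj_on ?g (common_nbrs S u v)"
  proof
    fix c d assume c: "c \<in> common_nbrs S u v" and d: "d \<in> common_nbrs S u v" and eq: "?g c = ?g d"
    have "{v,c} \<in> ?g d" unfolding eq[symmetric] by simp
    then have "{v,c} = {u,v} \<or> {v,c} = {v,d} \<or> {v,c} = {d,u}" by simp
    then show "c = d"
      using common_nbrs_notin[OF assms(1) c] common_nbrs_notin[OF assms(1) d] assms(3)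
      by (auto simp: doubleton_eq_iff)
  qed
  ultimately show ?thesis
    unfolding triangles_insert[OF assms(1,3)]
    using finite_triangles[OF assms(2)] finite_common_nbrs[OF assms(1,2)]
    by (simp add: card_Un_disjoint card_image)
qed

section \<open>The counter equals the number of sampled triangles\<close>

definition state_of :: "'a set set \<Rightarrow> 'a set set \<times> int" where
  "state_of S = (S, int (card (triangles S)))"

lemma fst_state_of [simp]: "fst (state_of S) = S"
  by (simp add: state_of_def)

lemma nbr_count_insert_self:
  assumes "edge_set S" "card e = 2"
  shows "nbr_count (insert e S) e = nbr_count S e"
proof -
  obtain u v where "e = {u,v}" "u \<noteq> v" using assms(2) by (meson card_2_iff)
  then show ?thesis using common_nbrs_insert_self[OF assms(1)] by (simp add: nbr_count_doubleton)
qed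

lemma card_triangles_insert_nbr_count:
  assumes "edge_set S" "finite S" "card e = 2" "e \<notin> S"
  shows "int (card (triangles (insert e S))) = int (card (triangles S)) + nbr_count S e"
proof -
  obtain u v where "e = {u,v}" "u \<noteq> v" using assms(3) by (meson card_2_iff)
  then show ?thesis using card_triangles_insert[OF assms(1,2)] assms(4)
    by (simp add: nbr_count_doubleton)
qed

lemma ins_edge_state_of:
  assumes "edge_set S" "finite S" "card e = 2" "e \<notin> S"
  shows "ins_edge e (state_of S) = state_of (insert e S)"
  using card_triangles_insert_nbr_count[OF assms] nbr_count_insert_self[OF assms(1,3)]
  by (simp add: ins_edge_def state_of_def)

lemma del_edge_state_of:
  assumes "edge_set S" "finite S" "e \<in> S"
  shows "del_edge e (state_of S) = state_of (S - {e})"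
proof -
  have "edge_set (S - {e})" "card e = 2" using assms(1,3) by (auto simp: edge_set_def)
  then have "int (card (triangles S)) = int (card (triangles (S - {e}))) + nbr_count (S - {e}) e"
    using card_triangles_insert_nbr_count[of "S - {e}" e] assms(2,3) by (simp add: insert_absorb)
  then show ?thesis by (simp add: del_edge_def state_of_def Let_def)
qed

section \<open>Reservoir sampling\<close>

lemma subsets_with_card_nonempty: "m \<le> card E \<Longrightarrow> {S. S \<subseteq> E \<and> card S = m} \<noteq> {}"
  by (metis (mono_tags, lifting) empty_Collect_eq obtain_subset_with_card_n)

lemma subsets_with_card_self: "finite E \<Longrightarrow> {S. S \<subseteq> E \<and> card S = card E} = {E}"
  by (auto dest: card_subset_eq)

definition reservoir_update :: "real \<Rightarrow> 'b \<Rightarrow> 'b set \<Rightarrow> 'b set pmf" where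
  "reservoir_update p e S = bind_pmf (bernoulli_pmf p)
     (\<lambda>b. if b then map_pmf (\<lambda>f. insert e (S - {f})) (pmf_of_set S) else return_pmf S)"

lemma set_pmf_reservoir_update:
  assumes "finite S" "S \<noteq> {}"
  shows "set_pmf (reservoir_update p e S) \<subseteq> insert S ((\<lambda>f. insert e (S - {f})) ` S)"
proof -
  have "set_pmf (pmf_of_set S) = S" using assms by simp
  then show ?thesis by (auto simp: reservoir_update_def split: if_splits)
qed

lemma pmf_reservoir_update:
  assumes "0 \<le> p" "p \<le> 1" "finite S" "S \<noteq> {}"
  shows "pmf (reservoir_update p e S) x
           = p * card {f\<in>S. insert e (S - {f}) = x} / card S + (1 - p) * indicator {S} x"
  using assms
  by (simp add: reservoir_update_def pmf_bind integral_bernoulli_pmf pmf_map measure_pmf_of_set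
      vimage_def Int_def indicator_def)

lemma sum_card_replacements:
  assumes "finite E" "e \<notin> E" "1 \<le> m" "x \<subseteq> insert e E" "card x = m" "e \<in> x"
  shows "(\<Sum>S | S \<subseteq> E \<and> card S = m. card {f\<in>S. insert e (S - {f}) = x}) = card E + 1 - m"
proof -
  let ?A = "{S. S \<subseteq> E \<and> card S = m}"
  let ?B = "\<lambda>S. {f\<in>S. insert e (S - {f}) = x}"
  let ?y = "x - {e}"
  have y: "?y \<subseteq> E" "card ?y = m - 1" "finite ?y"
    using assms(1,4-6) finite_subset by auto
  have "Sigma ?A ?B = (\<lambda>f. (insert f ?y, f)) ` (E - ?y)"
  proof (intro equalityI subsetI)
    fix p assume "p \<in> Sigma ?A ?B"
    then obtain S f where p: "p = (S, f)" "S \<subseteq> E" "f \<in> S" "insert e (S - {f}) = x"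
      by blast
    then have "S - {f} = ?y" using assms(2) by auto
    then show "p \<in> (\<lambda>f. (insert f ?y, f)) ` (E - ?y)" using p by auto
  next
    fix p assume "p \<in> (\<lambda>f. (insert f ?y, f)) ` (E - ?y)"
    then obtain f where f: "p = (insert f ?y, f)" "f \<in> E" "f \<notin> ?y" by blast
    then have "card (insert f ?y) = m" using y assms(3) by simp
    moreover have "insert e (insert f ?y - {f}) = x" using f(3) assms(6) by auto
    ultimately show "p \<in> Sigma ?A ?B" using f y(1) by auto
  qed
  moreover have "inj_on (\<lambda>f. (insert f ?y, f)) (E - ?y)" by (rule inj_onI) simp
  ultimately have "card (Sigma ?A ?B) = card E - (m - 1)"
    using y assms(1) by (simp add: card_image card_Diff_subset)
  moreover have "card (Sigma ?A ?B) = (\<Sum>S\<in>?A. card (?B S))"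
    using assms(1) by (intro card_SigmaI) (auto intro: finite_subset)
  ultimately show ?thesis using assms(3) by simp
qed

lemma binomial_reservoir_ratio:
  assumes "m \<le> k"
  shows "(1 - real m / real (Suc k)) / real (k choose m) = 1 / real (Suc k choose m)"
proof -
  have pos: "real (k choose m) \<noteq> 0" "real (Suc k choose m) \<noteq> 0" using assms by simp_all
  have "real (Suc k - m) * real (Suc k choose m) = real (Suc k) * real (k choose m)"
    using binomial_absorb_comp[of "Suc k" m] by (metis diff_Suc_1 of_nat_mult)
  then have "real (Suc k - m) / real (Suc k) = real (k choose m) / real (Suc k choose m)"
    using pos by (simp add: frac_eq_eq ac_simps)
  moreover have "1 - real m / real (Suc k) = real (Suc k - m) / real (Suc k)"
    using assms by (simp add: field_simps of_nat_diff)
  ultimately show ?thesis using pos by simp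
qed

lemma sum_pmf_reservoir_update:
  assumes "finite E" "e \<notin> E" "1 \<le> m" "m \<le> card E" "x \<subseteq> insert e E" "card x = m"
  defines "p \<equiv> real m / real (Suc (card E))"
  shows "(\<Sum>S | S \<subseteq> E \<and> card S = m. pmf (reservoir_update p e S) x) = 1 - p"
proof -
  let ?A = "{S. S \<subseteq> E \<and> card S = m}"
  let ?r = "\<lambda>S. card {f\<in>S. insert e (S - {f}) = x}"
  have "0 \<le> p" "p \<le> 1" using assms(4) unfolding p_def by auto
  then have pmf_eq: "pmf (reservoir_update p e S) x = p * ?r S / m + (1 - p) * indicator {S} x"
    if "S \<in> ?A" for S
    using that assms(1,3) pmf_reservoir_update[of p S e x] finite_subset by fastforce
  show ?thesis
  proof (cases "e \<in> x")
    case True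
    have "indicator {S} x = (0::real)" if "S \<in> ?A" for S
      using that True assms(2) by (auto simp: indicator_def)
    then have "(\<Sum>S\<in>?A. pmf (reservoir_update p e S) x) = p / m * real (\<Sum>S\<in>?A. ?r S)"
      by (simp add: pmf_eq sum_distrib_left)
    also have "(\<Sum>S\<in>?A. ?r S) = card E + 1 - m"
      using sum_card_replacements[OF assms(1-3,5,6) True] .
    also have "p / m * real (card E + 1 - m) = 1 - p"
    proof -
      have "a / b / a * (b - a) = 1 - a / b" if "a \<noteq> 0" "b > 0" for a b :: real
        using that by (simp add: field_simps)
      moreover have "real (card E + 1 - m) = real (Suc (card E)) - real m"
        using assms(4) by simp
      ultimately show ?thesis unfolding p_def using assms(3) by simp
    qed
    finally show ?thesis .
  next
    case False
    have "(\<Sum>S\<in>?A. pmf (reservoir_update p e S) x) = (\<Sum>S\<in>?A. (1 - p) * indicator {S} x)"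
    proof (rule sum.cong[OF refl])
      fix S assume "S \<in> ?A"
      moreover have no_replacement: "{f\<in>S. insert e (S - {f}) = x} = {}" using False by blast
      ultimately show "pmf (reservoir_update p e S) x = (1 - p) * indicator {S} x"
        unfolding pmf_eq[OF \<open>S \<in> ?A\<close>] no_replacement by simp
    qed
    also have "\<dots> = 1 - p"
      using False assms(1,5,6) by (simp add: indicator_def subset_insert)
    finally show ?thesis .
  qed
qed

lemma set_pmf_bind_reservoir_update:
  assumes "finite E" "e \<notin> E" "1 \<le> m" "m \<le> card E"
  shows "set_pmf (bind_pmf (pmf_of_set {S. S \<subseteq> E \<and> card S = m}) (reservoir_update p e))
           \<subseteq> {S. S \<subseteq> insert e E \<and> card S = m}"
proof -
  have "T \<subseteq> insert e E \<and> card T = m"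
    if "S \<subseteq> E" "card S = m" "T \<in> set_pmf (reservoir_update p e S)" for S T
  proof -
    have S: "finite S" "S \<noteq> {}" "e \<notin> S" using that(1,2) assms finite_subset by auto
    from that(3) set_pmf_reservoir_update[OF S(1,2)]
    consider "T = S" | f where "f \<in> S" "T = insert e (S - {f})" by blast
    then show ?thesis
    proof cases
      case 2
      then have "card T = Suc (card S - 1)" using S by simp
      then show ?thesis using that(1,2) 2 S assms(3) by auto
    qed (use that(1,2) in auto)
  qed
  then show ?thesis
    using assms(1) subsets_with_card_nonempty[OF assms(4)] by auto
qed

lemma reservoir_update_uniform:
  assumes "finite E" "e \<notin> E" "1 \<le> m" "m \<le> card E"
  shows "bind_pmf (pmf_of_set {S. S \<subseteq> E \<and> card S = m})
           (reservoir_update (real m / real (Suc (card E))) e)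
         = pmf_of_set {S. S \<subseteq> insert e E \<and> card S = m}"
    (is "?lhs = pmf_of_set ?A'")
proof (rule pmf_eqI)
  fix x
  let ?A = "{S. S \<subseteq> E \<and> card S = m}"
  have A: "finite ?A" "?A \<noteq> {}" "card ?A = card E choose m"
    using assms(1) subsets_with_card_nonempty[OF assms(4)] by (simp_all add: n_subsets)
  have "m \<le> card (insert e E)" using assms(1,2,4) by simp
  then have A': "finite ?A'" "?A' \<noteq> {}" "card ?A' = Suc (card E) choose m"
    using assms(1,2) subsets_with_card_nonempty[of m "insert e E"] by (simp_all add: n_subsets)
  show "pmf ?lhs x = pmf (pmf_of_set ?A') x"
  proof (cases "x \<in> ?A'")
    case True
    then have "pmf ?lhs x = (1 - real m / real (Suc (card E))) / real (card E choose m)"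
      using A sum_pmf_reservoir_update[OF assms] by (simp add: pmf_bind_pmf_of_set)
    also have "\<dots> = pmf (pmf_of_set ?A') x"
      using True A' binomial_reservoir_ratio[OF assms(4)] by simp
    finally show ?thesis .
  next
    case False
    then have "x \<notin> set_pmf ?lhs" using set_pmf_bind_reservoir_update[OF assms] by blast
    then show ?thesis using False A'(1,2) by (simp add: pmf_eq_0_set_pmf)
  qed
qed

section \<open>Distribution of the sample\<close>

lemma triest_step_state_of_le:
  assumes "t \<le> M" "edge_set S" "finite S" "card e = 2" "e \<notin> S"
  shows "triest_step M t e (state_of S) = return_pmf (state_of (insert e S))"
  using assms by (simp add: triest_step_def ins_edge_state_of)

lemma triest_step_state_of_gt:
  assumes "M < t" "edge_set S" "finite S" "S \<noteq> {}" "card e = 2" "e \<notin> S"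
  shows "triest_step M t e (state_of S) = map_pmf state_of (reservoir_update (real M / real t) e S)"
proof -
  have replace: "ins_edge e (del_edge f (state_of S)) = state_of (insert e (S - {f}))" if "f \<in> S" for f
    using that assms(2-6) edge_set_subset[OF assms(2), of "S - {f}"]
    by (simp add: del_edge_state_of ins_edge_state_of)
  have replace_map: "map_pmf (\<lambda>f. ins_edge e (del_edge f (state_of S))) (pmf_of_set S)
        = map_pmf state_of (map_pmf (\<lambda>f. insert e (S - {f})) (pmf_of_set S))"
    unfolding map_pmf_comp using replace assms(3,4) by (intro map_pmf_cong) auto
  have "triest_step M t e (state_of S) = bind_pmf (bernoulli_pmf (real M / real t))
      (\<lambda>b. if b then map_pmf (\<lambda>f. ins_edge e (del_edge f (state_of S))) (pmf_of_set S)
           else return_pmf (state_of S))"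
    using assms(1) unfolding triest_step_def fst_state_of by simp
  also have "\<dots> = bind_pmf (bernoulli_pmf (real M / real t))
      (\<lambda>b. if b then map_pmf state_of (map_pmf (\<lambda>f. insert e (S - {f})) (pmf_of_set S))
           else return_pmf (state_of S))"
    unfolding replace_map ..
  also have "\<dots> = map_pmf state_of (reservoir_update (real M / real t) e S)"
    unfolding reservoir_update_def map_bind_pmf by (rule bind_pmf_cong) auto
  finally show ?thesis .
qed

lemma bind_triest_step_uniform:
  assumes "1 \<le> M" "M \<le> card E" "finite E" "edge_set E" "e \<notin> E" "card e = 2"
  shows "bind_pmf (pmf_of_set {S. S \<subseteq> E \<and> card S = M})
           (\<lambda>S. triest_step M (Suc (card E)) e (state_of S))
         = map_pmf state_of (pmf_of_set {S. S \<subseteq> insert e E \<and> card S = M})"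
proof -
  let ?A = "{S. S \<subseteq> E \<and> card S = M}" and ?p = "real M / real (Suc (card E))"
  have A: "finite ?A" "?A \<noteq> {}" using assms(2,3) subsets_with_card_nonempty by auto
  have "bind_pmf (pmf_of_set ?A) (\<lambda>S. triest_step M (Suc (card E)) e (state_of S))
      = bind_pmf (pmf_of_set ?A) (\<lambda>S. map_pmf state_of (reservoir_update ?p e S))"
  proof (rule bind_pmf_cong[OF refl])
    fix S assume "S \<in> set_pmf (pmf_of_set ?A)"
    then have S: "S \<subseteq> E" "card S = M" using A by auto
    then have "finite S" "S \<noteq> {}" using assms(1,3) finite_subset by auto
    then show "triest_step M (Suc (card E)) e (state_of S) = map_pmf state_of (reservoir_update ?p e S)"
      using assms(2,4-6) S(1) by (intro triest_step_state_of_gt) (auto intro: edge_set_subset)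
  qed
  also have "\<dots> = map_pmf state_of (bind_pmf (pmf_of_set ?A) (reservoir_update ?p e))"
    unfolding map_bind_pmf ..
  also have "\<dots> = map_pmf state_of (pmf_of_set {S. S \<subseteq> insert e E \<and> card S = M})"
    using reservoir_update_uniform[OF assms(3,5,1,2)] by simp
  finally show ?thesis .
qed

lemma finite_edges_upto: "finite (edges_upto es k)"
  by (simp add: edges_upto_def)

lemma edges_upto_Suc: "edges_upto es (Suc k) = insert (es (Suc k)) (edges_upto es k)"
  by (simp add: edges_upto_def atLeastAtMostSuc_conv)

lemma card_edges_upto:
  assumes "inj_on es {1..t}" "k \<le> t"
  shows "card (edges_upto es k) = k"
proof -
  have "inj_on es {1..k}" using assms by (auto intro: inj_on_subset)
  then show ?thesis by (simp add: edges_upto_def card_image)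
qed

lemma new_edge_notin_edges_upto:
  assumes "inj_on es {1..t}" "Suc k \<le> t"
  shows "es (Suc k) \<notin> edges_upto es k"
proof
  assume "es (Suc k) \<in> edges_upto es k"
  then have "card (edges_upto es (Suc k)) = k"
    using card_edges_upto[OF assms(1)] assms(2) by (simp add: edges_upto_Suc insert_absorb)
  then show False using card_edges_upto[OF assms] by simp
qed

lemma edge_set_edges_upto:
  assumes "\<forall>i\<in>{1..t}. \<exists>u v. u \<noteq> v \<and> es i = {u, v}" "k \<le> t"
  shows "edge_set (edges_upto es k)"
  unfolding edge_set_def edges_upto_def
proof
  fix e assume "e \<in> es ` {1..k}"
  then obtain i where "i \<in> {1..k}" "e = es i" by blast
  moreover from this(1) have "i \<in> {1..t}" using assms(2) by simp
  ultimately obtain u v where "u \<noteq> v" "e = {u,v}" using assms(1) by blast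
  then show "card e = 2" by simp
qed

lemma triest_base_state_distribution:
  assumes "1 \<le> M" "\<forall>i\<in>{1..t}. \<exists>u v. u \<noteq> v \<and> es i = {u, v}"
    and "inj_on es {1..t}" "k \<le> t"
  shows "triest_base M es k
           = map_pmf state_of (pmf_of_set {S. S \<subseteq> edges_upto es k \<and> card S = min k M})"
  using assms(4)
proof (induction k)
  case 0
  have "{S. S \<subseteq> edges_upto es 0 \<and> card S = min 0 M} = {{}}" by (auto simp: edges_upto_def)
  then show ?case by (simp add: pmf_of_set_singleton state_of_def)
next
  case (Suc k)
  let ?E = "edges_upto es k" and ?e = "es (Suc k)"
  have E: "finite ?E" "card ?E = k" "edge_set ?E"
    using Suc.prems finite_edges_upto card_edges_upto[OF assms(3)] edge_set_edges_upto[OF assms(2)]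
    by simp_all
  have e: "?e \<notin> ?E" "card ?e = 2"
    using new_edge_notin_edges_upto[OF assms(3) Suc.prems] edge_set_edges_upto[OF assms(2) Suc.prems]
    by (auto simp: edge_set_def edges_upto_Suc)
  have step: "triest_base M es (Suc k)
      = bind_pmf (pmf_of_set {S. S \<subseteq> ?E \<and> card S = min k M})
          (\<lambda>S. triest_step M (Suc k) ?e (state_of S))"
    using Suc by (simp add: bind_map_pmf)
  show ?case
  proof (cases "Suc k \<le> M")
    case True
    then have "{S. S \<subseteq> ?E \<and> card S = min k M} = {?E}"
      "{S. S \<subseteq> edges_upto es (Suc k) \<and> card S = min (Suc k) M} = {insert ?e ?E}"
      using subsets_with_card_self[of ?E] subsets_with_card_self[of "insert ?e ?E"] E e(1)
      by (simp_all add: edges_upto_Suc)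
    then show ?thesis
      unfolding step using True E e
      by (simp add: triest_step_state_of_le pmf_of_set_singleton bind_return_pmf)
  next
    case False
    then show ?thesis
      unfolding step using bind_triest_step_uniform[OF assms(1) _ E(1,3) e] E(2)
      by (simp add: edges_upto_Suc)
  qed
qed

section \<open>Expected number of sampled triangles\<close>

lemma card_subsets_containing:
  assumes "finite E" "T \<subseteq> E" "card T \<le> m"
  shows "card {S. S \<subseteq> E \<and> card S = m \<and> T \<subseteq> S} = (card E - card T) choose (m - card T)"
proof -
  let ?B = "{B. B \<subseteq> E - T \<and> card B = m - card T}"
  have T: "finite T" using assms(1,2) finite_subset by blast
  have "{S. S \<subseteq> E \<and> card S = m \<and> T \<subseteq> S} = (\<lambda>B. B \<union> T) ` ?B"
  proof (intro equalityI subsetI)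
    fix S assume S: "S \<in> {S. S \<subseteq> E \<and> card S = m \<and> T \<subseteq> S}"
    then have "S - T \<in> ?B" using T by (auto simp: card_Diff_subset)
    moreover have "S = (S - T) \<union> T" using S by blast
    ultimately show "S \<in> (\<lambda>B. B \<union> T) ` ?B" by blast
  next
    fix S assume "S \<in> (\<lambda>B. B \<union> T) ` ?B"
    then obtain B where B: "B \<subseteq> E - T" "card B = m - card T" "S = B \<union> T" by blast
    have "finite B" "B \<inter> T = {}" using B(1) assms(1) finite_subset by blast+
    then have "card S = m" using B(2,3) T assms(3) by (simp add: card_Un_disjoint)
    then show "S \<in> {S. S \<subseteq> E \<and> card S = m \<and> T \<subseteq> S}" using B(1,3) assms(2) by blast
  qed
  moreover have "inj_on (\<lambda>B. B \<union> T) ?B" by (rule inj_onI) blast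
  ultimately show ?thesis
    using assms(1,2) T by (simp add: card_image n_subsets card_Diff_subset)
qed

lemma sum_card_triangles_subsets:
  assumes "finite E" "3 \<le> m"
  shows "(\<Sum>S | S \<subseteq> E \<and> card S = m. card (triangles S))
           = card (triangles E) * ((card E - 3) choose (m - 3))"
proof -
  let ?U = "{S. S \<subseteq> E \<and> card S = m}"
  have "(\<Sum>S\<in>?U. card (triangles S)) = (\<Sum>S\<in>?U. card {T \<in> triangles E. T \<subseteq> S})"
    by (intro sum.cong refl) (auto simp: triangles_subset)
  also have "\<dots> = (\<Sum>S\<in>?U. \<Sum>T\<in>triangles E. if T \<subseteq> S then 1 else 0)"
    using finite_triangles[OF assms(1)] by (simp flip: sum.inter_filter)
  also have "\<dots> = (\<Sum>T\<in>triangles E. \<Sum>S\<in>?U. if T \<subseteq> S then 1 else 0)"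
    by (rule sum.swap)
  also have "\<dots> = (\<Sum>T\<in>triangles E. card {S. S \<subseteq> E \<and> card S = m \<and> T \<subseteq> S})"
    using assms(1) by (simp flip: sum.inter_filter add: conj_assoc)
  also have "\<dots> = (\<Sum>T\<in>triangles E. (card E - 3) choose (m - 3))"
  proof (rule sum.cong[OF refl])
    fix T assume T: "T \<in> triangles E"
    show "card {S. S \<subseteq> E \<and> card S = m \<and> T \<subseteq> S} = (card E - 3) choose (m - 3)"
      using card_subsets_containing[OF assms(1) triangle_subset[OF T]] card_triangle[OF T] assms(2)
      by simp
  qed
  finally show ?thesis by simp
qed

lemma xi_mult_binomial:
  assumes "a \<le> M" "M < t"
  shows "xi M a t * real ((t - a) choose (M - a)) = real (t choose M)"
  using assms(1)
proof (induction a)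
  case 0
  then show ?case using assms(2) by (simp add: xi_def)
next
  case (Suc a)
  let ?C = "(t - a) choose (M - a)" and ?C' = "(t - Suc a) choose (M - Suc a)"
  have xi_Suc: "xi M (Suc a) t = xi M a t * (real (t - a) / real (M - a))"
    using assms(2) Suc.prems by (simp add: xi_def of_nat_diff)
  have "(t - a) * ?C' = ?C * (M - a)"
    using Suc_times_binomial_eq[of "t - Suc a" "M - Suc a"] Suc.prems assms(2)
    by (simp add: Suc_diff_Suc)
  then have absorb: "real (t - a) * real ?C' = real ?C * real (M - a)"
    by (metis of_nat_mult)
  have "xi M (Suc a) t * real ?C' = xi M a t * (real (t - a) * real ?C') / real (M - a)"
    unfolding xi_Suc by simp
  also have "\<dots> = xi M a t * real ?C"
    unfolding absorb using Suc.prems by simp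
  also have "\<dots> = real (t choose M)"
    using Suc.IH Suc.prems by simp
  finally show ?case .
qed

lemma expectation_xi_card_triangles:
  assumes "finite E" "3 \<le> M" "M < card E"
  shows "measure_pmf.expectation (pmf_of_set {S. S \<subseteq> E \<and> card S = M})
           (\<lambda>S. xi M 3 (card E) * real (card (triangles S)))
         = real (card (triangles E))"
proof -
  let ?A = "{S. S \<subseteq> E \<and> card S = M}"
  have A: "finite ?A" "?A \<noteq> {}" "card ?A = card E choose M"
    using assms(1) subsets_with_card_nonempty[of M E] assms(3) by (simp_all add: n_subsets)
  have "measure_pmf.expectation (pmf_of_set ?A) (\<lambda>S. xi M 3 (card E) * real (card (triangles S)))
      = xi M 3 (card E) * real (\<Sum>S\<in>?A. card (triangles S)) / real (card E choose M)"
    using A by (simp add: integral_pmf_of_set sum_distrib_left)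
  also have "\<dots> = xi M 3 (card E) * real ((card E - 3) choose (M - 3)) * real (card (triangles E))
                    / real (card E choose M)"
    using sum_card_triangles_subsets[OF assms(1,2)] by (simp add: ac_simps)
  also have "\<dots> = real (card (triangles E))"
    using xi_mult_binomial[OF assms(2,3)] assms(3) by simp
  finally show ?thesis .
qed

theorem theorem4p2:
  fixes M t :: nat and es :: "nat \<Rightarrow> 'a set"
  assumes "M \<ge> 6"
    and "\<forall>i\<in>{1..t}. \<exists>u v. u \<noteq> v \<and> es i = {u, v}"
    and "inj_on es {1..t}"
  shows "(t \<le> M \<longrightarrow> (\<forall>st \<in> set_pmf (triest_base M es t).
            xi M 3 t * real_of_int (snd st) = real_of_int (snd st) \<and>
            real_of_int (snd st) = real (card (triangles (edges_upto es t)))))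
       \<and> (t > M \<longrightarrow> measure_pmf.expectation (triest_base M es t)
              (\<lambda>st. xi M 3 t * real_of_int (snd st))
            = real (card (triangles (edges_upto es t))))"
proof -
  let ?E = "edges_upto es t"
  have E: "finite ?E" "card ?E = t"
    using finite_edges_upto card_edges_upto[OF assms(3) order_refl] by simp_all
  have distribution:
    "triest_base M es t = map_pmf state_of (pmf_of_set {S. S \<subseteq> ?E \<and> card S = min t M})"
    using triest_base_state_distribution[OF _ assms(2,3) order_refl] assms(1) by simp
  show ?thesis
  proof (intro conjI impI)
    assume "t \<le> M"
    then have "set_pmf (triest_base M es t) = {state_of ?E}" and "xi M 3 t = 1"
      using E subsets_with_card_self[OF E(1)]
      by (simp_all add: distribution pmf_of_set_singleton xi_def)
    then show "\<forall>st \<in> set_pmf (triest_base M es t).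
        xi M 3 t * real_of_int (snd st) = real_of_int (snd st) \<and>
        real_of_int (snd st) = real (card (triangles ?E))"
      by (simp add: state_of_def)
  next
    assume "M < t"
    then show "measure_pmf.expectation (triest_base M es t) (\<lambda>st. xi M 3 t * real_of_int (snd st))
        = real (card (triangles ?E))"
      using expectation_xi_card_triangles[OF E(1), of M] E assms(1)
      by (simp add: distribution state_of_def)
  qed
qed

end
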